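(* Let $\Omega\subset\mathbb{R}^2$ be a convex open domain with compact closure containing the origin, and let $\sigma$ be arclength measure on $\partial\Omega$. Define $$\mathcal{M}f(x)=\sup_{k\in\mathbb{Z}}\Big|\int_{\partial\Omega} f(x-2^k y)\,d\sigma(y)\Big|.$$ For $\theta\in S^1$ let $\ell^+(\theta)$ be the unique affine line perpendicular to $\theta$ meeting $\partial\Omega$ such that $\Omega\subset\{y-t\theta: t>0,\ y\in\ell^+(\theta)\}$, and $\ell^-(\theta)$ the unique affine line perpendicular to $\theta$ meeting $\partial\Omega$ such that $\Omega\subset\{y+t\theta: t>0,\ y\in\ell^-(\theta)\}$. For $\delta>0$ let $\mathcal{C}^\pm(\theta,\delta)=\{y\in\partial\Omega:\mathrm{dist}(y,\ell^\pm(\theta))\le\delta\}$ and $\Lambda(\theta,\delta)=\max_\pm\sigma(\mathcal{C}^\pm(\theta,\delta))$. Let $\delta_0>0$ be such that for all $\theta\in S^1$ and all $\delta<\delta_0$ the arcs $\mathcal{C}^+(\theta,\delta)$ and $\mathcal{C}^-(\theta,\delta)$ are disjoint. Then for every $1\le q<\infty$ there is $c>0$ such that $$\sup_{\|f\|_q=1}\|\mathcal{M}f\|_q\ \ge\ c\,\sup_{\theta\in S^1}\Big(\int_0^{\delta_0}\Lambda(\theta,\delta)^q\,\frac{d\delta}{\delta}\Big)^{1/q}.$$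
   Context: Both sides may be $+\infty$; in particular, if $\mathcal{M}$ is bounded on $L^q(\mathbb{R}^2)$ then $\sup_{\theta}\int_0^{\delta_0}\Lambda(\theta,\delta)^q\,d\delta/\delta<\infty$. *)

theory Defs
  imports "HOL-Analysis.Analysis"
begin

type_synonym pt = "real^2"

text \<open>One-dimensional Hausdorff outer measure (normalised so that it equals length on segments).\<close>
definition hausdorff1 :: "pt set \<Rightarrow> ennreal" where
  "hausdorff1 A = (SUP d\<in>{0<..}. INF C\<in>{C :: nat \<Rightarrow> pt set.
        A \<subseteq> (\<Union>i. C i) \<and> (\<forall>i. bounded (C i) \<and> diameter (C i) \<le> d)}.
        (\<Sum>i. ennreal (diameter (C i))))"

definition arclength :: "pt set \<Rightarrow> pt measure" where
  "arclength \<Omega> = measure_of UNIV (sets borel) (\<lambda>A. hausdorff1 (A \<inter> frontier \<Omega>))"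

definition maxop :: "pt set \<Rightarrow> (pt \<Rightarrow> real) \<Rightarrow> pt \<Rightarrow> ennreal" where
  "maxop \<Omega> f x = (SUP k::int. ennreal \<bar>integral\<^sup>L (arclength \<Omega>)
        (\<lambda>y. f (x - (2 powr real_of_int k) *\<^sub>R y))\<bar>)"

definition enn_powr :: "real \<Rightarrow> ennreal \<Rightarrow> ennreal" where
  "enn_powr q a = (if a = \<infinity> then \<infinity> else ennreal (enn2real a powr q))"

definition enn_root :: "real \<Rightarrow> ennreal \<Rightarrow> ennreal" where
  "enn_root q a = (if a = \<infinity> then \<infinity> else ennreal (enn2real a powr (1 / q)))"

definition lq_norm_enn :: "real \<Rightarrow> (pt \<Rightarrow> ennreal) \<Rightarrow> ennreal" where
  "lq_norm_enn q g = enn_root q (\<integral>\<^sup>+ x. enn_powr q (g x) \<partial>lborel)"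

definition lq_norm :: "real \<Rightarrow> (pt \<Rightarrow> real) \<Rightarrow> ennreal" where
  "lq_norm q f = lq_norm_enn q (\<lambda>x. ennreal \<bar>f x\<bar>)"

definition Cc :: "(pt \<Rightarrow> real) \<Rightarrow> bool" where
  "Cc f \<longleftrightarrow> continuous_on UNIV f \<and> compact (closure {x. f x \<noteq> 0})"

definition lplus :: "pt set \<Rightarrow> pt \<Rightarrow> pt set" where
  "lplus \<Omega> \<theta> = (THE L. (\<exists>c. L = {y. y \<bullet> \<theta> = c}) \<and> L \<inter> frontier \<Omega> \<noteq> {} \<and>
      \<Omega> \<subseteq> {y - t *\<^sub>R \<theta> | y t. t > 0 \<and> y \<in> L})"

definition lminus :: "pt set \<Rightarrow> pt \<Rightarrow> pt set" where
  "lminus \<Omega> \<theta> = (THE L. (\<exists>c. L = {y. y \<bullet> \<theta> = c}) \<and> L \<inter> frontier \<Omega> \<noteq> {} \<and>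
      \<Omega> \<subseteq> {y + t *\<^sub>R \<theta> | y t. t > 0 \<and> y \<in> L})"

definition Cplus :: "pt set \<Rightarrow> pt \<Rightarrow> real \<Rightarrow> pt set" where
  "Cplus \<Omega> \<theta> \<delta> = {y \<in> frontier \<Omega>. infdist y (lplus \<Omega> \<theta>) \<le> \<delta>}"

definition Cminus :: "pt set \<Rightarrow> pt \<Rightarrow> real \<Rightarrow> pt set" where
  "Cminus \<Omega> \<theta> \<delta> = {y \<in> frontier \<Omega>. infdist y (lminus \<Omega> \<theta>) \<le> \<delta>}"

definition Lambda :: "pt set \<Rightarrow> pt \<Rightarrow> real \<Rightarrow> real" where
  "Lambda \<Omega> \<theta> \<delta> = max (measure (arclength \<Omega>) (Cplus \<Omega> \<theta> \<delta>))
                        (measure (arclength \<Omega>) (Cminus \<Omega> \<theta> \<delta>))"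

end

theory Submission
  imports Defs
begin

text \<open>
  Fix a direction \<open>\<theta>\<close>, a width \<open>t\<close> and a large length \<open>W\<close>, and test \<open>\<M>\<close> on a bump which equals 1
  on the \<open>t \<times> W\<close> rectangle centred at the origin with short side along \<open>\<theta>\<close>. If \<open>x\<close> lies in the
  rectangle of width \<open>t\<close> just below the dilated supporting line \<open>2\<^sup>j \<ell>\<^sup>+(\<theta>)\<close>, then \<open>x - 2\<^sup>j y\<close> lies in
  the plateau for every \<open>y \<in> C\<^sup>+(\<theta>, t 2\<^sup>-\<^sup>j)\<close>, so \<open>\<M>\<close> of the bump is at least
  \<open>\<sigma>(C\<^sup>+(\<theta>, t 2\<^sup>-\<^sup>j))\<close> there. Since \<open>\<Omega>\<close> contains a disc around the origin, these rectangles
  are disjoint for all \<open>j \<ge> m\<close> (with \<open>m\<close> depending only on \<open>\<delta>\<^sub>0\<close> and \<open>\<Omega>\<close>) when \<open>t = \<delta>\<^sub>0\<close>,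
  whence \<open>\<Sum>\<^sub>j\<^sub>\<ge>\<^sub>m \<sigma>(C\<^sup>+(\<theta>, \<delta>\<^sub>0 2\<^sup>-\<^sup>j))\<^sup>q \<le> 16 \<parallel>\<M>\<parallel>\<^sup>q\<close>; the first \<open>m\<close> scales are bounded by
  the length of \<open>\<partial>\<Omega>\<close>, which is finite because \<open>\<partial>\<Omega>\<close> is the image of a circle under the
  nearest-point projection onto \<open>closure \<Omega>\<close>. As \<open>\<Lambda>(\<theta>, \<cdot>)\<close> is monotone, a dyadic decomposition
  bounds \<open>\<integral>\<^sub>0\<^sup>\<delta>\<^sup>0 \<Lambda>\<^sup>q d\<delta>/\<delta>\<close> by these sums for \<open>\<theta>\<close> and \<open>-\<theta>\<close>. So the right-hand side is finite when
  \<open>\<M>\<close> is bounded, and it vanishes when \<open>\<parallel>\<M>\<parallel> = 0\<close>; this yields a constant \<open>c > 0\<close>.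
\<close>

section \<open>Coordinates adapted to a direction\<close>

definition perp :: "real^2 \<Rightarrow> real^2" where
  "perp v = vector [-(v$2), v$1]"

lemma inner_vec2: "(x::real^2) \<bullet> y = x$1 * y$1 + x$2 * y$2"
  by (simp add: inner_vec_def sum_2)

lemma norm_vec2_power2: "norm (x::real^2) ^ 2 = x$1 ^ 2 + x$2 ^ 2"
  by (subst power2_norm_eq_inner) (simp add: inner_vec2 power2_eq_square)

lemma inner_perp_self: "v \<bullet> perp v = 0"
  by (simp add: inner_vec2 perp_def)

lemma norm_perp: "norm (perp v) = norm v"
  by (simp add: norm_eq_sqrt_inner inner_vec2 perp_def algebra_simps)

lemma unit_frame_decomposition:
  assumes "norm v = 1"
  shows "x = (x \<bullet> v) *\<^sub>R v + (x \<bullet> perp v) *\<^sub>R perp v"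
proof -
  have "v$1 ^ 2 + v$2 ^ 2 = 1" using assms norm_vec2_power2[of v] by simp
  moreover have "((x \<bullet> v) *\<^sub>R v + (x \<bullet> perp v) *\<^sub>R perp v)$i = x$i * (v$1 ^ 2 + v$2 ^ 2)"
    if "i = 1 \<or> i = 2" for i
    using that by (auto simp: inner_vec2 perp_def algebra_simps power2_eq_square)
  ultimately show ?thesis by (simp add: vec_eq_iff forall_2)
qed

definition rotate_to :: "pt \<Rightarrow> pt \<Rightarrow> pt" where
  "rotate_to \<theta> p = p$1 *\<^sub>R \<theta> + p$2 *\<^sub>R perp \<theta>"

lemma inner_rotate_to:
  assumes "norm \<theta> = 1"
  shows "rotate_to \<theta> p \<bullet> \<theta> = p$1" "rotate_to \<theta> p \<bullet> perp \<theta> = p$2"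
proof -
  have "\<theta> \<bullet> \<theta> = 1" "perp \<theta> \<bullet> perp \<theta> = 1"
    using assms norm_perp[of \<theta>] by (metis norm_eq_1)+
  moreover have "\<theta> \<bullet> perp \<theta> = 0" "perp \<theta> \<bullet> \<theta> = 0"
    using inner_perp_self[of \<theta>] by (auto simp: inner_commute)
  ultimately show "rotate_to \<theta> p \<bullet> \<theta> = p$1" "rotate_to \<theta> p \<bullet> perp \<theta> = p$2"
    unfolding rotate_to_def by (simp_all add: inner_add_left)
qed

lemma orthogonal_transformation_rotate_to:
  assumes "norm \<theta> = 1"
  shows "orthogonal_transformation (rotate_to \<theta>)"
  unfolding orthogonal_transformation_def
proof
  show "linear (rotate_to \<theta>)"
    unfolding rotate_to_def by (rule linearI) (simp_all add: algebra_simps)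
  show "\<forall>v w. rotate_to \<theta> v \<bullet> rotate_to \<theta> w = v \<bullet> w"
  proof (intro allI)
    fix v w
    have "rotate_to \<theta> v \<bullet> rotate_to \<theta> w
        = w$1 * (rotate_to \<theta> v \<bullet> \<theta>) + w$2 * (rotate_to \<theta> v \<bullet> perp \<theta>)"
      unfolding rotate_to_def[of \<theta> w] by (simp add: inner_add_right)
    also have "\<dots> = v \<bullet> w"
      using inner_rotate_to[OF assms, of v] by (simp add: inner_vec2 mult.commute)
    finally show "rotate_to \<theta> v \<bullet> rotate_to \<theta> w = v \<bullet> w" .
  qed
qed

definition rect :: "pt \<Rightarrow> real \<Rightarrow> real \<Rightarrow> real \<Rightarrow> pt set" where
  "rect \<theta> a b c = {x. a \<le> x \<bullet> \<theta> \<and> x \<bullet> \<theta> \<le> b \<and> \<bar>x \<bullet> perp \<theta>\<bar> \<le> c}"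

lemma mem_cbox_vec2:
  "(p::pt) \<in> cbox a b \<longleftrightarrow> a$1 \<le> p$1 \<and> p$1 \<le> b$1 \<and> a$2 \<le> p$2 \<and> p$2 \<le> b$2"
  unfolding interval_cbox_cart[symmetric] by (auto simp: less_eq_vec_def forall_2)

lemma rect_eq_rotate_to_image:
  assumes "norm \<theta> = 1"
  shows "rect \<theta> a b c = rotate_to \<theta> ` cbox (vector [a, -c]) (vector [b, c])"
proof
  show "rect \<theta> a b c \<subseteq> rotate_to \<theta> ` cbox (vector [a, -c]) (vector [b, c])"
  proof
    fix x assume x: "x \<in> rect \<theta> a b c"
    have "x = rotate_to \<theta> (vector [x \<bullet> \<theta>, x \<bullet> perp \<theta>])"
      unfolding rotate_to_def using unit_frame_decomposition[OF assms, of x] by simp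
    moreover have "(vector [x \<bullet> \<theta>, x \<bullet> perp \<theta>] :: pt) \<in> cbox (vector [a, -c]) (vector [b, c])"
      using x unfolding rect_def mem_cbox_vec2 by auto
    ultimately show "x \<in> rotate_to \<theta> ` cbox (vector [a, -c]) (vector [b, c])" by (rule image_eqI)
  qed
  show "rotate_to \<theta> ` cbox (vector [a, -c]) (vector [b, c]) \<subseteq> rect \<theta> a b c"
    using inner_rotate_to[OF assms] unfolding rect_def by (auto simp: mem_cbox_vec2)
qed

lemma emeasure_rect:
  assumes "norm \<theta> = 1" "a \<le> b" "0 \<le> c"
  shows "emeasure lebesgue (rect \<theta> a b c) = ennreal ((b - a) * (2 * c))"
proof -
  let ?B = "cbox (vector [a, -c]) (vector [b, c]) :: pt set"
  have rot: "orthogonal_transformation (rotate_to \<theta>)"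
    by (rule orthogonal_transformation_rotate_to[OF assms(1)])
  have "vector [a, c] \<in> ?B" using assms by (simp add: mem_cbox_vec2)
  then have "?B \<noteq> {}" by blast
  from content_cbox_cart[OF this, folded measure_def]
  have "measure lborel ?B = (b - a) * (2 * c)" by (simp add: UNIV_2 algebra_simps)
  then have "measure lebesgue (rect \<theta> a b c) = (b - a) * (2 * c)"
    unfolding rect_eq_rotate_to_image[OF assms(1)] using measure_orthogonal_image[OF rot, of ?B] by simp
  moreover have "rect \<theta> a b c \<in> lmeasurable"
    unfolding rect_eq_rotate_to_image[OF assms(1)] by (rule measurable_orthogonal_image[OF rot]) simp
  ultimately show ?thesis by (simp add: emeasure_eq_measure2)
qed

lemma closed_rect: "closed (rect \<theta> a b c)"
  unfolding rect_def by (intro closed_Collect_conj closed_Collect_le continuous_intros)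

lemma bounded_rect:
  assumes "norm \<theta> = 1"
  shows "bounded (rect \<theta> a b c)"
proof -
  have "norm x \<le> max \<bar>a\<bar> \<bar>b\<bar> + c" if "x \<in> rect \<theta> a b c" for x
  proof -
    have "norm x \<le> norm ((x \<bullet> \<theta>) *\<^sub>R \<theta>) + norm ((x \<bullet> perp \<theta>) *\<^sub>R perp \<theta>)"
      by (subst unit_frame_decomposition[OF assms, of x]) (rule norm_triangle_ineq)
    also have "\<dots> = \<bar>x \<bullet> \<theta>\<bar> + \<bar>x \<bullet> perp \<theta>\<bar>" using assms norm_perp[of \<theta>] by simp
    also have "\<dots> \<le> max \<bar>a\<bar> \<bar>b\<bar> + c" using that unfolding rect_def by auto
    finally show ?thesis .
  qed
  then show ?thesis unfolding bounded_iff by blast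
qed

lemma disjoint_family_on_dilated_rects:
  assumes "\<And>i j. i \<in> J \<Longrightarrow> j \<in> J \<Longrightarrow> i < j \<Longrightarrow> 2^i * h < 2^j * h - t"
  shows "disjoint_family_on (\<lambda>j. rect \<theta> (2^j * h - t) (2^j * h) c) J"
  unfolding disjoint_family_on_def
proof (intro ballI impI)
  have less: "rect \<theta> (2^i * h - t) (2^i * h) c \<inter> rect \<theta> (2^j * h - t) (2^j * h) c = {}"
    if "i \<in> J" "j \<in> J" "i < j" for i j :: nat
    using assms[OF that] unfolding rect_def by auto
  fix i j assume "i \<in> J" "j \<in> J" "i \<noteq> j"
  then consider "i < j" | "j < i" by linarith
  then show "rect \<theta> (2^i * h - t) (2^i * h) c \<inter> rect \<theta> (2^j * h - t) (2^j * h) c = {}"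
    using less[of i j] less[of j i] \<open>i \<in> J\<close> \<open>j \<in> J\<close> by cases blast+
qed

lemma dilation_separates:
  fixes h \<delta>0 :: real
  assumes "0 < \<delta>0" "\<delta>0 < 2^m * h" "m \<le> i" "i < j"
  shows "2^i * h < 2^j * h - \<delta>0"
proof -
  have "0 < 2^m * h" using assms(1,2) by linarith
  then have h: "0 < h" by (simp add: zero_less_mult_iff)
  have "2 * 2^i * h \<le> 2^j * h"
    using h assms(4) power_increasing[of "Suc i" j "2::real"] by simp
  moreover have "2^m * h \<le> 2^i * h"
    using h assms(3) power_increasing[of m i "2::real"] by simp
  ultimately show ?thesis using assms(2) by linarith
qed

lemma exists_dilation_bound:
  fixes D :: real
  assumes "finite J" "D \<ge> 0"
  shows "\<exists>W>0. \<forall>j\<in>J. 2^j * D \<le> W / 2"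
proof -
  have "2^j * D \<le> (\<Sum>j\<in>J. 2^j * D)" if "j \<in> J" for j
    using assms that by (intro member_le_sum) auto
  moreover have "0 \<le> (\<Sum>j\<in>J. 2^j * D)" using assms(2) by (intro sum_nonneg) auto
  ultimately show ?thesis by (intro exI[of _ "2 * (\<Sum>j\<in>J. 2^j * D) + 2"]) fastforce
qed

section \<open>Normalised bump functions\<close>

definition tent :: "real \<Rightarrow> real" where
  "tent s = max 0 (min 1 (2 - \<bar>s\<bar>))"

definition bump :: "pt \<Rightarrow> real \<Rightarrow> real \<Rightarrow> pt \<Rightarrow> real" where
  "bump \<theta> t W z = tent ((z \<bullet> \<theta>) / t) * tent ((z \<bullet> perp \<theta>) / W)"

lemma bump_nonneg: "0 \<le> bump \<theta> t W z"
  unfolding bump_def tent_def by simp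

lemma bump_le_one: "bump \<theta> t W z \<le> 1"
  unfolding bump_def tent_def by (auto intro: mult_le_one)

lemma continuous_on_bump: "continuous_on UNIV (bump \<theta> t W)"
  unfolding bump_def tent_def divide_inverse by (intro continuous_intros)

lemma bump_eq_one:
  assumes "t > 0" "W > 0" "\<bar>z \<bullet> \<theta>\<bar> \<le> t" "\<bar>z \<bullet> perp \<theta>\<bar> \<le> W"
  shows "bump \<theta> t W z = 1"
proof -
  have "\<bar>(z \<bullet> \<theta>) / t\<bar> \<le> 1" "\<bar>(z \<bullet> perp \<theta>) / W\<bar> \<le> 1"
    using assms by (auto simp: divide_le_eq_1)
  then show ?thesis unfolding bump_def tent_def by simp
qed

lemma bump_eq_zero:
  assumes "t > 0" "W > 0" "z \<notin> rect \<theta> (-2*t) (2*t) (2*W)"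
  shows "bump \<theta> t W z = 0"
proof -
  have "\<bar>z \<bullet> \<theta>\<bar> > 2*t \<or> \<bar>z \<bullet> perp \<theta>\<bar> > 2*W" using assms(3) unfolding rect_def by auto
  then have "\<bar>(z \<bullet> \<theta>) / t\<bar> \<ge> 2 \<or> \<bar>(z \<bullet> perp \<theta>) / W\<bar> \<ge> 2"
    using assms(1,2) by (auto simp: field_simps)
  then show ?thesis unfolding bump_def tent_def by auto
qed

lemma Cc_bump_div:
  assumes "norm \<theta> = 1" "t > 0" "W > 0"
  shows "Cc (\<lambda>z. bump \<theta> t W z / K)"
proof -
  have "{z. bump \<theta> t W z / K \<noteq> 0} \<subseteq> rect \<theta> (-2*t) (2*t) (2*W)"
    using bump_eq_zero[OF assms(2,3)] by force
  then have "bounded {z. bump \<theta> t W z / K \<noteq> 0}"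
    using bounded_rect[OF assms(1)] bounded_subset by blast
  moreover have "continuous_on UNIV (\<lambda>z. bump \<theta> t W z * inverse K)"
    by (intro continuous_intros continuous_on_bump)
  ultimately show ?thesis unfolding Cc_def by (simp add: divide_inverse)
qed

lemma nn_integral_bump_powr_bounds:
  assumes "norm \<theta> = 1" "t > 0" "W > 0" "q > 0"
  shows "ennreal (4 * t * W) \<le> (\<integral>\<^sup>+ x. ennreal (bump \<theta> t W x powr q) \<partial>lborel)"
    and "(\<integral>\<^sup>+ x. ennreal (bump \<theta> t W x powr q) \<partial>lborel) \<le> ennreal (16 * t * W)"
proof -
  let ?inner = "rect \<theta> (-t) t W" and ?outer = "rect \<theta> (-2*t) (2*t) (2*W)"
  have lower: "indicator ?inner x \<le> ennreal (bump \<theta> t W x powr q)" for x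
  proof (cases "x \<in> ?inner")
    case True
    then have "bump \<theta> t W x = 1" using assms by (intro bump_eq_one) (auto simp: rect_def)
    then show ?thesis using True by simp
  qed simp
  have upper: "ennreal (bump \<theta> t W x powr q) \<le> indicator ?outer x" for x
  proof (cases "x \<in> ?outer")
    case True
    have "bump \<theta> t W x powr q \<le> 1"
      using bump_nonneg bump_le_one assms(4) by (intro powr_le1) auto
    then show ?thesis using True by simp
  next
    case False
    then show ?thesis using bump_eq_zero[OF assms(2,3) False] by simp
  qed
  have "ennreal (4 * t * W) = emeasure lebesgue ?inner"
    using emeasure_rect[OF assms(1), of "-t" t W] assms by (simp add: algebra_simps)
  also have "\<dots> \<le> (\<integral>\<^sup>+ x. ennreal (bump \<theta> t W x powr q) \<partial>lebesgue)"
    using lower closed_rect by (simp add: nn_integral_mono flip: nn_integral_indicator)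
  finally show "ennreal (4 * t * W) \<le> (\<integral>\<^sup>+ x. ennreal (bump \<theta> t W x powr q) \<partial>lborel)"
    by (simp add: nn_integral_completion)
  have "(\<integral>\<^sup>+ x. ennreal (bump \<theta> t W x powr q) \<partial>lebesgue) \<le> emeasure lebesgue ?outer"
    using upper closed_rect by (simp add: nn_integral_mono flip: nn_integral_indicator)
  also have "\<dots> = ennreal (16 * t * W)"
    using emeasure_rect[OF assms(1), of "-2*t" "2*t" "2*W"] assms by (simp add: algebra_simps)
  finally show "(\<integral>\<^sup>+ x. ennreal (bump \<theta> t W x powr q) \<partial>lborel) \<le> ennreal (16 * t * W)"
    by (simp add: nn_integral_completion)
qed

lemma enn_powr_ennreal: "0 \<le> a \<Longrightarrow> enn_powr q (ennreal a) = ennreal (a powr q)"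
  unfolding enn_powr_def by simp

lemma enn_powr_mono:
  assumes "q > 0" "a \<le> b"
  shows "enn_powr q a \<le> enn_powr q b"
proof (cases "b = \<infinity>")
  case False
  then have "a \<noteq> \<infinity>" "enn2real a \<le> enn2real b"
    using assms(2) by (auto simp: top_unique enn2real_mono top.not_eq_extremum)
  then show ?thesis using False assms(1) unfolding enn_powr_def by (auto intro!: ennreal_leI powr_mono2)
qed (simp add: enn_powr_def)

lemma enn_root_mono:
  assumes "q > 0" "a \<le> b"
  shows "enn_root q a \<le> enn_root q b"
proof (cases "b = \<infinity>")
  case False
  then have "a \<noteq> \<infinity>" "enn2real a \<le> enn2real b"
    using assms(2) by (auto simp: top_unique enn2real_mono top.not_eq_extremum)
  then show ?thesis using False assms(1) unfolding enn_root_def by (auto intro!: ennreal_leI powr_mono2)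
qed (simp add: enn_root_def)

lemma enn_root_le_ennreal_imp:
  assumes "q > 0" "0 \<le> s" "0 \<le> a" "enn_root q (ennreal s) \<le> ennreal a"
  shows "s \<le> a powr q"
proof -
  have "s powr (1/q) \<le> a" using assms by (simp add: enn_root_def)
  then have "(s powr (1/q)) powr q \<le> a powr q" using assms(1) by (intro powr_mono2) auto
  then show ?thesis using assms(1,2) by (simp add: powr_powr)
qed

lemma powr_div_16_le_mult:
  assumes "0 \<le> a" "K > 0" "K powr q \<le> 16 * s"
  shows "ennreal (a powr q / 16) \<le> ennreal ((a / K) powr q) * ennreal s"
proof -
  have s: "s > 0" using assms(2,3) powr_gt_zero[of K q] by linarith
  have "a powr q / 16 = a powr q * s / (16 * s)" using s by simp
  also have "\<dots> \<le> a powr q * s / K powr q"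
    using assms(2,3) s by (intro divide_left_mono) auto
  also have "\<dots> = (a / K) powr q * s"
    using assms(1,2) by (simp add: powr_divide)
  finally show ?thesis using s by (simp flip: ennreal_mult)
qed

lemma normalized_bump:
  assumes "norm \<theta> = 1" "t > 0" "W > 0" "q > 0"
  obtains K where "K > 0" "K powr q \<le> 16 * t * W"
    "Cc (\<lambda>z. bump \<theta> t W z / K)" "lq_norm q (\<lambda>z. bump \<theta> t W z / K) = 1"
proof -
  define N where "N = (\<integral>\<^sup>+ x. ennreal (bump \<theta> t W x powr q) \<partial>lborel)"
  have N_bounds: "ennreal (4 * t * W) \<le> N" "N \<le> ennreal (16 * t * W)"
    using nn_integral_bump_powr_bounds[OF assms] unfolding N_def by auto
  define n where "n = enn2real N"
  have N_eq: "N = ennreal n"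
    unfolding n_def using N_bounds(2) by (metis ennreal_enn2real ennreal_less_top order.strict_trans1)
  have "4 * t * W \<le> n" "n \<le> 16 * t * W"
    using N_bounds assms(2,3) unfolding N_eq by (simp_all add: n_def)
  moreover have "0 < 4 * t * W" using assms(2,3) by simp
  ultimately have n_pos: "n > 0" by linarith
  define K where "K = n powr (1/q)"
  have K_pos: "K > 0" unfolding K_def using n_pos by simp
  have K_powr: "K powr q = n" unfolding K_def using n_pos assms(4) by (simp add: powr_powr)
  have "Cc (\<lambda>z. bump \<theta> t W z / K)" by (rule Cc_bump_div[OF assms(1-3)])
  moreover have "lq_norm q (\<lambda>z. bump \<theta> t W z / K) = 1"
  proof -
    have "enn_powr q (ennreal \<bar>bump \<theta> t W x / K\<bar>) = ennreal (bump \<theta> t W x powr q) * ennreal (1 / n)" for x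
      using bump_nonneg[of \<theta> t W x] K_pos n_pos
      by (simp add: enn_powr_ennreal powr_divide K_powr flip: ennreal_mult)
    then have "(\<integral>\<^sup>+ x. enn_powr q (ennreal \<bar>bump \<theta> t W x / K\<bar>) \<partial>lborel)
        = (\<integral>\<^sup>+ x. ennreal (bump \<theta> t W x powr q) * ennreal (1 / n) \<partial>lborel)"
      by simp
    also have "\<dots> = N * ennreal (1 / n)"
      unfolding N_def using borel_measurable_continuous_onI[OF continuous_on_bump]
      by (intro nn_integral_multc) measurable
    also have "\<dots> = 1" unfolding N_eq using n_pos by (simp flip: ennreal_mult)
    finally show ?thesis unfolding lq_norm_def lq_norm_enn_def by (simp add: enn_root_def)
  qed
  ultimately show ?thesis using that K_pos K_powr \<open>n \<le> 16 * t * W\<close> by blast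
qed

lemma sum_disjoint_indicator_le:
  fixes c :: "'i \<Rightarrow> ennreal"
  assumes "finite J" "disjoint_family_on R J" "\<And>j. j \<in> J \<Longrightarrow> x \<in> R j \<Longrightarrow> c j \<le> b"
  shows "(\<Sum>j\<in>J. c j * indicator (R j) x) \<le> b"
proof (cases "\<exists>j\<in>J. x \<in> R j")
  case True
  then obtain i where i: "i \<in> J" "x \<in> R i" by blast
  have "x \<notin> R j" if "j \<in> J - {i}" for j
    using assms(2) i that unfolding disjoint_family_on_def by blast
  then have "(\<Sum>j\<in>J. c j * indicator (R j) x) = c i"
    using i by (simp add: sum.remove[OF assms(1) i(1)])
  then show ?thesis using assms(3) i by simp
qed (simp add: sum.neutral)

lemma nn_integral_sum_cmult_indicator:
  assumes "\<And>j. j \<in> J \<Longrightarrow> R j \<in> sets M"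
  shows "(\<integral>\<^sup>+ x. (\<Sum>j\<in>J. c j * indicator (R j) x) \<partial>M) = (\<Sum>j\<in>J. c j * emeasure M (R j))"
proof -
  have "(\<integral>\<^sup>+ x. (\<Sum>j\<in>J. c j * indicator (R j) x) \<partial>M) = (\<Sum>j\<in>J. \<integral>\<^sup>+ x. c j * indicator (R j) x \<partial>M)"
  proof (rule nn_integral_sum)
    fix j assume "j \<in> J"
    with assms show "(\<lambda>x. c j * indicator (R j) x) \<in> borel_measurable M" by measurable
  qed
  also have "\<dots> = (\<Sum>j\<in>J. c j * emeasure M (R j))"
    using assms by (intro sum.cong refl nn_integral_cmult_indicator)
  finally show ?thesis .
qed

lemma dyadic_scale_exists:
  fixes \<delta> \<delta>0 :: real
  assumes "0 < \<delta>" "\<delta> < \<delta>0"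
  obtains j :: nat where "\<delta>0 / 2^Suc j < \<delta>" "\<delta> \<le> \<delta>0 / 2^j"
proof -
  obtain n :: nat where "\<delta>0 / \<delta> < 2^n" using real_arch_pow[of 2 "\<delta>0 / \<delta>"] by auto
  then have "\<delta>0 / 2^Suc n < \<delta>"
    using assms by (simp add: field_simps)
  then have ex: "\<exists>j::nat. \<delta>0 / 2^Suc j < \<delta>" by blast
  define j where "j = (LEAST j::nat. \<delta>0 / 2^Suc j < \<delta>)"
  have "\<delta>0 / 2^Suc j < \<delta>" unfolding j_def by (rule LeastI_ex[OF ex])
  moreover have "\<delta> \<le> \<delta>0 / 2^j"
  proof (cases j)
    case (Suc k)
    then have "\<not> \<delta>0 / 2^Suc k < \<delta>" using not_less_Least[of k "\<lambda>j. \<delta>0 / 2^Suc j < \<delta>"] j_def by simp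
    then show ?thesis using Suc by simp
  qed (use assms in simp)
  ultimately show ?thesis by (rule that)
qed

text \<open>On the dyadic interval \<open>(\<delta>\<^sub>0/2\<^sup>j\<^sup>+\<^sup>1, \<delta>\<^sub>0/2\<^sup>j]\<close> the integrand is at most
  \<open>F(\<delta>\<^sub>0/2\<^sup>j) 2\<^sup>j\<^sup>+\<^sup>1/\<delta>\<^sub>0\<close>, and the interval has length \<open>\<delta>\<^sub>0/2\<^sup>j\<^sup>+\<^sup>1\<close>.\<close>

lemma nn_integral_dyadic_le:
  fixes F :: "real \<Rightarrow> real"
  assumes "\<delta>0 > 0" and nonneg: "\<And>\<delta>. 0 < \<delta> \<Longrightarrow> 0 \<le> F \<delta>"
    and mono: "\<And>\<delta> \<delta>'. 0 < \<delta> \<Longrightarrow> \<delta> \<le> \<delta>' \<Longrightarrow> F \<delta> \<le> F \<delta>'"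
  shows "(\<integral>\<^sup>+ \<delta>\<in>{0<..<\<delta>0}. ennreal (F \<delta> / \<delta>) \<partial>lborel) \<le> (\<Sum>j. ennreal (F (\<delta>0 / 2^j)))"
proof -
  define c where "c j = F (\<delta>0 / 2^j) * 2^Suc j / \<delta>0" for j :: nat
  define I where "I j = {\<delta>0 / 2^Suc j <.. \<delta>0 / 2^j}" for j :: nat
  define G where "G j \<delta> = ennreal (c j) * indicator (I j) \<delta>" for j \<delta>
  have c: "0 \<le> c j" for j unfolding c_def using nonneg assms(1) by simp
  have pointwise: "ennreal (F \<delta> / \<delta>) * indicator {0<..<\<delta>0} \<delta> \<le> (\<Sum>j. G j \<delta>)" for \<delta>
  proof (cases "\<delta> \<in> {0<..<\<delta>0}")
    case True
    then obtain j where j: "\<delta>0 / 2^Suc j < \<delta>" "\<delta> \<le> \<delta>0 / 2^j"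
      using dyadic_scale_exists by auto
    have "F \<delta> / \<delta> = F \<delta> * (1 / \<delta>)" by simp
    also have "\<dots> \<le> F (\<delta>0 / 2^j) * (2^Suc j / \<delta>0)"
      using True j nonneg mono assms(1) by (intro mult_mono) (auto simp: field_simps)
    finally have "ennreal (F \<delta> / \<delta>) * indicator {0<..<\<delta>0} \<delta> \<le> G j \<delta>"
      using True j by (auto simp: G_def c_def I_def intro!: ennreal_leI)
    also have "\<dots> \<le> (\<Sum>j. G j \<delta>)"
      using sum_le_suminf[OF summableI, of "{j}" "\<lambda>j. G j \<delta>"] by simp
    finally show ?thesis .
  qed simp
  have "(\<integral>\<^sup>+ \<delta>\<in>{0<..<\<delta>0}. ennreal (F \<delta> / \<delta>) \<partial>lborel) \<le> (\<integral>\<^sup>+ \<delta>. (\<Sum>j. G j \<delta>) \<partial>lborel)"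
    by (intro nn_integral_mono pointwise)
  also have "\<dots> = (\<Sum>j. ennreal (c j) * emeasure lborel (I j))"
    by (simp add: G_def nn_integral_suminf I_def nn_integral_cmult_indicator)
  also have "\<dots> = (\<Sum>j. ennreal (F (\<delta>0 / 2^j)))"
  proof (rule suminf_cong)
    fix j
    have "\<delta>0 / 2^Suc j \<le> \<delta>0 / 2^j" using assms(1) by (simp add: divide_left_mono)
    then have "ennreal (c j) * emeasure lborel (I j) = ennreal (c j) * ennreal (\<delta>0 / 2^j - \<delta>0 / 2^Suc j)"
      by (simp add: I_def)
    also have "\<dots> = ennreal (c j * (\<delta>0 / 2^j - \<delta>0 / 2^Suc j))"
      using c \<open>\<delta>0 / 2^Suc j \<le> \<delta>0 / 2^j\<close> by (intro ennreal_mult[symmetric]) auto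
    also have "c j * (\<delta>0 / 2^j - \<delta>0 / 2^Suc j) = F (\<delta>0 / 2^j)"
      using assms(1) by (simp add: c_def field_simps)
    finally show "ennreal (c j) * emeasure lborel (I j) = ennreal (F (\<delta>0 / 2^j))" .
  qed
  finally show ?thesis .
qed

lemma ex_pos_mult_le_ennreal:
  fixes A B :: ennreal
  assumes "A < \<infinity> \<Longrightarrow> B < \<infinity>" and "A = 0 \<Longrightarrow> B = 0"
  shows "\<exists>c>0. ennreal c * B \<le> A"
proof (cases "A = \<infinity> \<or> B = 0")
  case True
  then show ?thesis by (intro exI[of _ 1]) auto
next
  case False
  then have "0 < A" "A < \<infinity>" "0 < B" "B < \<infinity>"
    using assms by (auto simp: top.not_eq_extremum zero_less_iff_neq_zero)
  then have pos: "0 < enn2real A" "0 < enn2real B" by (simp_all add: enn2real_positive_iff)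
  have "ennreal (enn2real A / enn2real B) * B = ennreal (enn2real A / enn2real B) * ennreal (enn2real B)"
    using \<open>B < \<infinity>\<close> by simp
  also have "\<dots> = ennreal (enn2real A)" using pos by (simp flip: ennreal_mult)
  also have "\<dots> = A" using \<open>A < \<infinity>\<close> by simp
  finally show ?thesis using pos by (intro exI[of _ "enn2real A / enn2real B"]) auto
qed

section \<open>Length of the boundary\<close>

lemma UN_uniform_subintervals:
  fixes a h :: real
  assumes "h \<ge> 0"
  shows "(\<Union>i\<le>M. {a + real i * h .. a + real (Suc i) * h}) = {a .. a + real (Suc M) * h}"
proof (induction M)
  case (Suc M)
  have "{a .. a + real (Suc M) * h} \<union> {a + real (Suc M) * h .. a + real (Suc (Suc M)) * h}
      = {a .. a + real (Suc (Suc M)) * h}"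
    using assms by (intro ivl_disj_un_two_touch) (auto simp: algebra_simps)
  then show ?case using Suc by (simp add: atMost_Suc Un_commute)
qed simp

lemma diameter_lipschitz_image:
  fixes f :: "real \<Rightarrow> 'a::real_normed_vector"
  assumes "L \<ge> 0" "u \<le> v" and lip: "\<And>s s'. s \<in> {u..v} \<Longrightarrow> s' \<in> {u..v} \<Longrightarrow> norm (f s - f s') \<le> L * \<bar>s - s'\<bar>"
  shows "bounded (f ` {u..v})" "diameter (f ` {u..v}) \<le> L * (v - u)"
proof -
  have close: "norm (f s - f s') \<le> L * (v - u)" if "s \<in> {u..v}" "s' \<in> {u..v}" for s s'
  proof -
    have "L * \<bar>s - s'\<bar> \<le> L * (v - u)" using that assms(1) by (intro mult_left_mono) auto
    with lip[OF that] show ?thesis by linarith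
  qed
  then have "f ` {u..v} \<subseteq> cball (f u) (L * (v - u))"
    using assms(2) by (auto simp: dist_norm)
  then show "bounded (f ` {u..v})" using bounded_cball bounded_subset by blast
  show "diameter (f ` {u..v}) \<le> L * (v - u)"
    using close assms by (intro diameter_le) (auto simp: dist_norm)
qed

lemma hausdorff1_le_lipschitz_image:
  fixes f :: "real \<Rightarrow> pt"
  assumes "a \<le> b" "L \<ge> 0"
    and lip: "\<And>s s'. s \<in> {a..b} \<Longrightarrow> s' \<in> {a..b} \<Longrightarrow> norm (f s - f s') \<le> L * \<bar>s - s'\<bar>"
    and "F \<subseteq> f ` {a..b}"
  shows "hausdorff1 F \<le> ennreal (L * (b - a))"
  unfolding hausdorff1_def
proof (rule SUP_least)
  fix d :: real assume "d \<in> {0<..}"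
  define M where "M = nat \<lceil>L * (b - a) / d\<rceil>"
  define h where "h = (b - a) / Suc M"
  define I where "I i = {a + real i * h .. a + real (Suc i) * h}" for i
  define C where "C i = (if i \<le> M then f ` I i else {})" for i
  have h: "h \<ge> 0" "real (Suc M) * h = b - a" using assms(1) unfolding h_def by simp_all
  have "L * (b - a) / d \<le> real (Suc M)" unfolding M_def by linarith
  then have Lh: "L * h \<le> d" using \<open>d \<in> {0<..}\<close> by (simp add: h_def field_simps)
  have ab_eq: "{a..b} = (\<Union>i\<le>M. I i)"
    unfolding I_def UN_uniform_subintervals[OF h(1)] h(2) by simp
  then have I_sub: "I i \<subseteq> {a..b}" if "i \<le> M" for i
    using that by blast
  have diam: "bounded (C i) \<and> diameter (C i) \<le> L * h" for i
  proof (cases "i \<le> M")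
    case True
    then have "\<And>s s'. s \<in> I i \<Longrightarrow> s' \<in> I i \<Longrightarrow> norm (f s - f s') \<le> L * \<bar>s - s'\<bar>"
      using lip I_sub by blast
    then show ?thesis
      using True diameter_lipschitz_image[OF assms(2), of "a + real i * h" "a + real (Suc i) * h" f] h(1)
      unfolding C_def I_def by (simp add: algebra_simps)
  qed (use assms(2) h in \<open>simp add: C_def\<close>)
  have "F \<subseteq> (\<Union>i. C i)"
    using assms(4) unfolding ab_eq C_def image_UN by fastforce
  then have "(INF C\<in>{C :: nat \<Rightarrow> pt set. F \<subseteq> (\<Union>i. C i) \<and> (\<forall>i. bounded (C i) \<and> diameter (C i) \<le> d)}.
        (\<Sum>i. ennreal (diameter (C i)))) \<le> (\<Sum>i. ennreal (diameter (C i)))"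
    using diam Lh by (intro INF_lower) (auto intro: order_trans)
  also have "\<dots> = (\<Sum>i\<le>M. ennreal (diameter (C i)))"
    by (rule suminf_finite) (auto simp: C_def)
  also have "\<dots> \<le> (\<Sum>i\<le>M. ennreal (L * h))"
    using diam by (intro sum_mono ennreal_leI) auto
  also have "\<dots> = ennreal (real (Suc M) * (L * h))"
    using h assms(2)
    by (simp only: sum_constant card_atMost ennreal_of_nat_eq_real_of_nat ennreal_mult'') (simp add: ennreal_mult)
  also have "real (Suc M) * (L * h) = L * (b - a)" using h(2) by (metis mult.left_commute)
  finally show "(INF C\<in>{C :: nat \<Rightarrow> pt set. F \<subseteq> (\<Union>i. C i) \<and> (\<forall>i. bounded (C i) \<and> diameter (C i) \<le> d)}.
        (\<Sum>i. ennreal (diameter (C i)))) \<le> ennreal (L * (b - a))" .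
qed

definition circle_point :: "real \<Rightarrow> real \<Rightarrow> pt" where
  "circle_point R s = vector [R * cos s, R * sin s]"

lemma circle_point_lipschitz:
  assumes "R \<ge> 0"
  shows "norm (circle_point R s - circle_point R s') \<le> (2 * R) * \<bar>s - s'\<bar>"
proof -
  have "\<bar>cos s - cos s'\<bar> = 2 * \<bar>sin ((s + s') / 2)\<bar> * \<bar>sin ((s' - s) / 2)\<bar>"
    by (simp add: cos_diff_cos abs_mult)
  also have "\<dots> \<le> 2 * 1 * \<bar>(s' - s) / 2\<bar>"
    by (intro mult_mono abs_sin_x_le_abs_x) auto
  finally have cos: "\<bar>cos s - cos s'\<bar> \<le> \<bar>s - s'\<bar>" by simp
  have "\<bar>sin s - sin s'\<bar> = 2 * \<bar>sin ((s - s') / 2)\<bar> * \<bar>cos ((s + s') / 2)\<bar>"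
    by (simp add: sin_diff_sin abs_mult)
  also have "\<dots> \<le> 2 * \<bar>(s - s') / 2\<bar> * 1"
    by (intro mult_mono abs_sin_x_le_abs_x) auto
  finally have sin: "\<bar>sin s - sin s'\<bar> \<le> \<bar>s - s'\<bar>" by simp
  have "norm (circle_point R s - circle_point R s') \<le> (\<Sum>i\<in>UNIV. \<bar>(circle_point R s - circle_point R s') $ i\<bar>)"
    by (rule norm_le_l1_cart)
  also have "\<dots> = R * \<bar>cos s - cos s'\<bar> + R * \<bar>sin s - sin s'\<bar>"
    using assms by (simp add: sum_2 circle_point_def right_diff_distrib[symmetric] abs_mult)
  also have "\<dots> \<le> R * \<bar>s - s'\<bar> + R * \<bar>s - s'\<bar>"
    using assms cos sin by (intro add_mono mult_left_mono) auto
  finally show ?thesis by simp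
qed

lemma circle_point_surj:
  assumes "norm w = R" "R > 0"
  obtains s where "s \<in> {0..2*pi}" "w = circle_point R s"
proof -
  have "(w$1 / R)^2 + (w$2 / R)^2 = ((w$1)^2 + (w$2)^2) / R^2"
    by (simp add: power_divide add_divide_distrib)
  also have "(w$1)^2 + (w$2)^2 = R^2" using assms norm_vec2_power2[of w] by simp
  also have "R^2 / R^2 = 1" using assms(2) by simp
  finally have "(w$1 / R)^2 + (w$2 / R)^2 = 1" .
  then obtain s where "0 \<le> s" "s < 2*pi" "w$1 / R = cos s" "w$2 / R = sin s"
    by (rule sincos_total_2pi)
  then show ?thesis
    using that[of s] assms(2) by (auto simp: circle_point_def vec_eq_iff forall_2 field_simps)
qed

lemma closest_point_add_normal:
  fixes S :: "'a::euclidean_space set"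
  assumes "convex S" "closed S" "y \<in> S" "\<And>z. z \<in> S \<Longrightarrow> u \<bullet> z \<le> u \<bullet> y" "t \<ge> 0"
  shows "closest_point S (y + t *\<^sub>R u) = y"
proof (rule closest_point_unique[symmetric, OF assms(1-3)], intro ballI)
  fix z assume "z \<in> S"
  have "(dist (y + t *\<^sub>R u) z)^2
      = (dist (y + t *\<^sub>R u) y)^2 + 2 * (t * (u \<bullet> y - u \<bullet> z)) + (y - z) \<bullet> (y - z)"
    unfolding dist_norm power2_norm_eq_inner by (simp add: algebra_simps inner_commute)
  moreover have "t * (u \<bullet> y - u \<bullet> z) \<ge> 0" using assms(4)[OF \<open>z \<in> S\<close>] assms(5) by simp
  moreover have "(y - z) \<bullet> (y - z) \<ge> 0" by simp
  ultimately have "(dist (y + t *\<^sub>R u) y)^2 \<le> (dist (y + t *\<^sub>R u) z)^2" by linarith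
  then show "dist (y + t *\<^sub>R u) y \<le> dist (y + t *\<^sub>R u) z" by (rule power2_le_imp_le) simp
qed

lemma sets_arclength: "sets (arclength \<Omega>) = sets borel"
  using sets.sigma_sets_eq[of "borel :: pt measure"]
  unfolding arclength_def by (simp add: sets_measure_of_conv)

lemma space_arclength: "space (arclength \<Omega>) = UNIV"
  unfolding arclength_def by (simp add: space_measure_of_conv)

text \<open>\<open>arclength \<Omega>\<close> is the restricted Hausdorff measure only if \<open>hausdorff1\<close> is countably additive
  on the Borel sets of the boundary; otherwise \<open>measure_of\<close> yields the null measure. The argument
  below only uses this upper bound, so it does not depend on which case occurs.\<close>

lemma emeasure_arclength_le: "emeasure (arclength \<Omega>) A \<le> hausdorff1 (A \<inter> frontier \<Omega>)"
  using sets.sigma_sets_eq[of "borel :: pt measure"]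
  unfolding arclength_def by (simp add: emeasure_measure_of_conv)

lemma borel_measurable_arclength:
  "f \<in> borel_measurable borel \<Longrightarrow> f \<in> borel_measurable (arclength \<Omega>)"
  using measurable_cong_sets[OF sets_arclength refl] by blast

section \<open>Supporting lines and caps\<close>

definition support_fun :: "pt set \<Rightarrow> pt \<Rightarrow> real" where
  "support_fun \<Omega> \<theta> = Sup ((\<lambda>z. z \<bullet> \<theta>) ` closure \<Omega>)"

lemma lminus_eq_lplus_uminus: "lminus \<Omega> \<theta> = lplus \<Omega> (-\<theta>)"
proof -
  have "(\<exists>c. L = {y. y \<bullet> \<theta> = c}) \<longleftrightarrow> (\<exists>c. L = {y. y \<bullet> (-\<theta>) = c})" for L :: "pt set"
  proof
    assume "\<exists>c. L = {y. y \<bullet> \<theta> = c}"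
    then obtain c where "L = {y. y \<bullet> \<theta> = c}" by blast
    then show "\<exists>c. L = {y. y \<bullet> (-\<theta>) = c}" by (intro exI[of _ "-c"]) auto
  next
    assume "\<exists>c. L = {y. y \<bullet> (-\<theta>) = c}"
    then obtain c where "L = {y. y \<bullet> (-\<theta>) = c}" by blast
    then show "\<exists>c. L = {y. y \<bullet> \<theta> = c}" by (intro exI[of _ "-c"]) auto
  qed
  then show ?thesis unfolding lminus_def lplus_def by simp
qed

lemma Cminus_eq_Cplus_uminus: "Cminus \<Omega> \<theta> \<delta> = Cplus \<Omega> (-\<theta>) \<delta>"
  unfolding Cminus_def Cplus_def lminus_eq_lplus_uminus ..

lemma closed_Cplus: "closed (Cplus \<Omega> \<theta> \<delta>)"
proof -
  have "Cplus \<Omega> \<theta> \<delta> = frontier \<Omega> \<inter> {y. infdist y (lplus \<Omega> \<theta>) \<le> \<delta>}"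
    unfolding Cplus_def by auto
  moreover have "closed {y. infdist y (lplus \<Omega> \<theta>) \<le> \<delta>}"
    by (intro closed_Collect_le continuous_intros)
  ultimately show ?thesis by (simp add: closed_Int)
qed

lemma Cplus_mono: "\<delta> \<le> \<delta>' \<Longrightarrow> Cplus \<Omega> \<theta> \<delta> \<subseteq> Cplus \<Omega> \<theta> \<delta>'"
  unfolding Cplus_def by auto

definition maxop_norm :: "pt set \<Rightarrow> real \<Rightarrow> ennreal" where
  "maxop_norm \<Omega> q = (SUP f\<in>{f. Cc f \<and> lq_norm q f = 1}. lq_norm_enn q (maxop \<Omega> f))"

locale convex_domain =
  fixes \<Omega> :: "pt set"
  assumes open_dom: "open \<Omega>" and convex_dom: "convex \<Omega>"
    and compact_closure_dom: "compact (closure \<Omega>)" and zero_in_dom: "0 \<in> \<Omega>"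
begin

lemma frontier_dom: "frontier \<Omega> = closure \<Omega> - \<Omega>"
  using open_dom by (simp add: frontier_def interior_open)

lemma inner_le_support_fun: "z \<in> closure \<Omega> \<Longrightarrow> z \<bullet> \<theta> \<le> support_fun \<Omega> \<theta>"
  unfolding support_fun_def using compact_closure_dom
  by (intro cSup_upper compact_imp_bounded[THEN bounded_imp_bdd_above] compact_continuous_image
      continuous_intros) auto

lemma support_fun_attained:
  obtains p where "p \<in> closure \<Omega>" "p \<bullet> \<theta> = support_fun \<Omega> \<theta>"
proof -
  have "compact ((\<lambda>z. z \<bullet> \<theta>) ` closure \<Omega>)"
    using compact_closure_dom by (intro compact_continuous_image continuous_intros)
  moreover have "closure \<Omega> \<noteq> {}" using zero_in_dom closure_subset by blast
  ultimately obtain p where p: "p \<in> closure \<Omega>" "\<And>z. z \<in> closure \<Omega> \<Longrightarrow> z \<bullet> \<theta> \<le> p \<bullet> \<theta>"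
    using compact_attains_sup[of "(\<lambda>z. z \<bullet> \<theta>) ` closure \<Omega>"] by blast
  then have "support_fun \<Omega> \<theta> \<le> p \<bullet> \<theta>" unfolding support_fun_def by (intro cSup_least) auto
  with inner_le_support_fun[OF p(1), of \<theta>] have "p \<bullet> \<theta> = support_fun \<Omega> \<theta>" by linarith
  with p(1) show ?thesis by (rule that)
qed

lemma inner_less_support_fun:
  assumes "norm \<theta> = 1" "z \<in> \<Omega>"
  shows "z \<bullet> \<theta> < support_fun \<Omega> \<theta>"
proof -
  obtain e where e: "e > 0" "ball z e \<subseteq> \<Omega>" using open_dom assms(2) open_contains_ball by blast
  then have "z + (e/2) *\<^sub>R \<theta> \<in> closure \<Omega>"
    using assms(1) closure_subset by (force simp: dist_norm)
  from inner_le_support_fun[OF this, of \<theta>] show ?thesis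
    using e assms(1) by (simp add: inner_add_left norm_eq_1)
qed

lemma support_fun_uniformly_positive: "\<exists>r>0. \<forall>\<theta>. norm \<theta> = 1 \<longrightarrow> r \<le> support_fun \<Omega> \<theta>"
proof -
  obtain e where e: "e > 0" "ball 0 e \<subseteq> \<Omega>" using open_dom zero_in_dom open_contains_ball by blast
  have "e/2 \<le> support_fun \<Omega> \<theta>" if "norm \<theta> = 1" for \<theta>
  proof -
    have "(e/2) *\<^sub>R \<theta> \<in> closure \<Omega>" using e that closure_subset by fastforce
    from inner_le_support_fun[OF this, of \<theta>] show ?thesis using that by (simp add: norm_eq_1)
  qed
  then show ?thesis using e(1) by (intro exI[of _ "e/2"]) auto
qed

lemma supporting_level_eq_support_fun:
  assumes "p \<in> frontier \<Omega>" "p \<bullet> \<theta> = c" "\<And>z. z \<in> \<Omega> \<Longrightarrow> z \<bullet> \<theta> \<le> c"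
  shows "c = support_fun \<Omega> \<theta>"
proof -
  have "p \<in> closure \<Omega>" using assms(1) frontier_dom by blast
  then have "c \<le> support_fun \<Omega> \<theta>" using inner_le_support_fun assms(2) by force
  moreover have "closed {z. z \<bullet> \<theta> \<le> c}" by (intro closed_Collect_le continuous_intros)
  with assms(3) have "closure \<Omega> \<subseteq> {z. z \<bullet> \<theta> \<le> c}" by (intro closure_minimal) auto
  moreover obtain p' where "p' \<in> closure \<Omega>" "p' \<bullet> \<theta> = support_fun \<Omega> \<theta>" by (rule support_fun_attained)
  ultimately show ?thesis by auto
qed

lemma lplus_eq:
  assumes "norm \<theta> = 1"
  shows "lplus \<Omega> \<theta> = {y. y \<bullet> \<theta> = support_fun \<Omega> \<theta>}"
  unfolding lplus_def
proof (rule the_equality)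
  let ?L = "{y. y \<bullet> \<theta> = support_fun \<Omega> \<theta>}"
  have \<theta>\<theta>: "\<theta> \<bullet> \<theta> = 1" using assms by (simp add: norm_eq_1)
  obtain p where p: "p \<in> closure \<Omega>" "p \<bullet> \<theta> = support_fun \<Omega> \<theta>" by (rule support_fun_attained)
  then have "p \<in> frontier \<Omega>"
    using inner_less_support_fun[OF assms] frontier_dom by fastforce
  moreover have "\<Omega> \<subseteq> {y - t *\<^sub>R \<theta> | y t. t > 0 \<and> y \<in> ?L}"
  proof
    fix z assume z: "z \<in> \<Omega>"
    define t where "t = support_fun \<Omega> \<theta> - z \<bullet> \<theta>"
    have "t > 0" using inner_less_support_fun[OF assms z] t_def by simp
    moreover have "(z + t *\<^sub>R \<theta>) \<bullet> \<theta> = support_fun \<Omega> \<theta>"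
      using \<theta>\<theta> by (simp add: inner_add_left t_def)
    ultimately show "z \<in> {y - t *\<^sub>R \<theta> | y t. t > 0 \<and> y \<in> ?L}"
      by (intro CollectI exI[of _ "z + t *\<^sub>R \<theta>"] exI[of _ t]) auto
  qed
  ultimately show "(\<exists>c. ?L = {y. y \<bullet> \<theta> = c}) \<and> ?L \<inter> frontier \<Omega> \<noteq> {} \<and>
      \<Omega> \<subseteq> {y - t *\<^sub>R \<theta> | y t. t > 0 \<and> y \<in> ?L}"
    using p by (intro conjI) blast+
next
  fix L assume L: "(\<exists>c. L = {y. y \<bullet> \<theta> = c}) \<and> L \<inter> frontier \<Omega> \<noteq> {} \<and>
      \<Omega> \<subseteq> {y - t *\<^sub>R \<theta> | y t. t > 0 \<and> y \<in> L}"
  have \<theta>\<theta>: "\<theta> \<bullet> \<theta> = 1" using assms by (simp add: norm_eq_1)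
  obtain c p where c: "L = {y. y \<bullet> \<theta> = c}" and p: "p \<in> L" "p \<in> frontier \<Omega>" using L by blast
  have "z \<bullet> \<theta> \<le> c" if "z \<in> \<Omega>" for z
  proof -
    from L that have "z \<in> {y - t *\<^sub>R \<theta> | y t. t > 0 \<and> y \<in> L}" by blast
    then obtain y t where "z = y - t *\<^sub>R \<theta>" "t > 0" "y \<in> L" by blast
    then show ?thesis using c \<theta>\<theta> by (simp add: inner_diff_left)
  qed
  then have "c = support_fun \<Omega> \<theta>" using p c by (intro supporting_level_eq_support_fun[of p]) auto
  then show "L = {y. y \<bullet> \<theta> = support_fun \<Omega> \<theta>}" using c by simp
qed

lemma Cplus_inner_bounds:
  assumes "norm \<theta> = 1" "y \<in> Cplus \<Omega> \<theta> \<delta>"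
  shows "y \<in> closure \<Omega>" "support_fun \<Omega> \<theta> - \<delta> \<le> y \<bullet> \<theta>" "y \<bullet> \<theta> \<le> support_fun \<Omega> \<theta>"
proof -
  show y: "y \<in> closure \<Omega>" using assms(2) frontier_dom unfolding Cplus_def by blast
  show "y \<bullet> \<theta> \<le> support_fun \<Omega> \<theta>" using inner_le_support_fun[OF y] .
  have line: "lplus \<Omega> \<theta> = {w. w \<bullet> \<theta> = support_fun \<Omega> \<theta>}" by (rule lplus_eq[OF assms(1)])
  then have "support_fun \<Omega> \<theta> *\<^sub>R \<theta> \<in> lplus \<Omega> \<theta>" using assms(1) by (simp add: norm_eq_1)
  then have nonempty: "lplus \<Omega> \<theta> \<noteq> {}" by blast
  have "support_fun \<Omega> \<theta> - y \<bullet> \<theta> \<le> infdist y (lplus \<Omega> \<theta>)"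
    unfolding infdist_notempty[OF nonempty]
  proof (rule cINF_greatest[OF nonempty])
    fix w assume "w \<in> lplus \<Omega> \<theta>"
    then have "w \<bullet> \<theta> = support_fun \<Omega> \<theta>" using line by blast
    moreover have "\<bar>(w - y) \<bullet> \<theta>\<bar> \<le> norm (w - y) * norm \<theta>" by (rule Cauchy_Schwarz_ineq2)
    ultimately show "support_fun \<Omega> \<theta> - y \<bullet> \<theta> \<le> dist y w"
      using assms(1) by (simp add: inner_diff_left dist_norm norm_minus_commute)
  qed
  moreover have "infdist y (lplus \<Omega> \<theta>) \<le> \<delta>" using assms(2) unfolding Cplus_def by blast
  ultimately show "support_fun \<Omega> \<theta> - \<delta> \<le> y \<bullet> \<theta>" by simp
qed

lemma closure_dom_bounded: "\<exists>D\<ge>0. \<forall>z\<in>closure \<Omega>. norm z \<le> D"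
proof -
  obtain D where D: "\<forall>z\<in>closure \<Omega>. norm z \<le> D"
    using compact_imp_bounded[OF compact_closure_dom] bounded_iff by blast
  moreover have "0 \<le> D" using D zero_in_dom closure_subset by force
  ultimately show ?thesis by blast
qed

text \<open>Every boundary point \<open>y\<close> has an outer normal \<open>u\<close>, and \<open>y\<close> is the nearest point of the closed
  convex set to every point of the ray \<open>y + t u\<close>, \<open>t \<ge> 0\<close>; this ray crosses a circle enclosing \<open>\<Omega>\<close>.\<close>

lemma frontier_in_projected_circle:
  assumes "y \<in> frontier \<Omega>" and D: "\<And>z. z \<in> closure \<Omega> \<Longrightarrow> norm z \<le> D"
  shows "y \<in> (\<lambda>s. closest_point (closure \<Omega>) (circle_point (D + 1) s)) ` {0..2*pi}"
proof -
  define R where "R = D + 1"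
  have y: "y \<in> closure \<Omega>" "y \<notin> rel_interior \<Omega>"
    using assms(1) frontier_dom rel_interior_open[OF open_dom] by auto
  have y_le: "norm y \<le> D" using D[OF y(1)] .
  then have R_pos: "R > 0" unfolding R_def using norm_ge_zero[of y] by linarith
  obtain a where a: "a \<noteq> 0" "\<And>z. z \<in> closure \<Omega> \<Longrightarrow> a \<bullet> y \<le> a \<bullet> z"
    by (rule supporting_hyperplane_relative_frontier[OF convex_dom y], blast)
  define u where "u = - (1 / norm a) *\<^sub>R a"
  have u: "norm u = 1" using a(1) by (simp add: u_def)
  have u_normal: "u \<bullet> z \<le> u \<bullet> y" if "z \<in> closure \<Omega>" for z
  proof -
    have "a \<bullet> y / norm a \<le> a \<bullet> z / norm a" using a(2)[OF that] by (simp add: divide_right_mono)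
    then show ?thesis by (simp add: u_def)
  qed
  have "2 * R = norm ((y + (2*R) *\<^sub>R u) - y)" using u R_pos by simp
  also have "\<dots> \<le> norm (y + (2*R) *\<^sub>R u) + norm y" by (rule norm_triangle_ineq4)
  finally have "R \<le> norm (y + (2*R) *\<^sub>R u)" using y_le R_def by simp
  moreover have "norm (y + 0 *\<^sub>R u) \<le> R" using y_le R_def by simp
  moreover have "continuous_on {0..2*R} (\<lambda>t. norm (y + t *\<^sub>R u))" by (intro continuous_intros)
  ultimately obtain t where t: "0 \<le> t" "norm (y + t *\<^sub>R u) = R"
    using IVT'[of "\<lambda>t. norm (y + t *\<^sub>R u)" 0 R "2*R"] R_pos by auto
  obtain s where "s \<in> {0..2*pi}" "y + t *\<^sub>R u = circle_point R s"
    by (rule circle_point_surj[OF t(2) R_pos])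
  moreover have "closest_point (closure \<Omega>) (y + t *\<^sub>R u) = y"
    using convex_dom y(1) u_normal t(1) by (intro closest_point_add_normal) auto
  ultimately show ?thesis unfolding R_def by (metis image_eqI)
qed

lemma hausdorff1_frontier_finite: "hausdorff1 (frontier \<Omega>) < \<infinity>"
proof -
  obtain D where D: "D \<ge> 0" "\<And>z. z \<in> closure \<Omega> \<Longrightarrow> norm z \<le> D"
    using closure_dom_bounded by blast
  define P where "P s = closest_point (closure \<Omega>) (circle_point (D + 1) s)" for s
  have "norm (P s - P s') \<le> (2 * (D + 1)) * \<bar>s - s'\<bar>" for s s'
  proof -
    have "closure \<Omega> \<noteq> {}" using zero_in_dom closure_subset by blast
    then have "norm (P s - P s') \<le> dist (circle_point (D + 1) s) (circle_point (D + 1) s')"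
      unfolding P_def using closest_point_lipschitz[of "closure \<Omega>"] convex_dom by (simp add: dist_norm)
    also have "\<dots> \<le> (2 * (D + 1)) * \<bar>s - s'\<bar>"
      using circle_point_lipschitz[of "D + 1" s s'] D(1) by (simp add: dist_norm)
    finally show ?thesis .
  qed
  moreover have "frontier \<Omega> \<subseteq> P ` {0..2*pi}"
    unfolding P_def using frontier_in_projected_circle D(2) by blast
  ultimately have "hausdorff1 (frontier \<Omega>) \<le> ennreal ((2 * (D + 1)) * (2*pi - 0))"
    using D(1) by (intro hausdorff1_le_lipschitz_image) auto
  also have "\<dots> < \<infinity>" by simp
  finally show ?thesis .
qed

lemma finite_measure_arclength: "finite_measure (arclength \<Omega>)"
proof
  have "emeasure (arclength \<Omega>) (space (arclength \<Omega>)) \<le> hausdorff1 (frontier \<Omega>)"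
    using emeasure_arclength_le[of \<Omega> UNIV] by (simp add: space_arclength)
  then show "emeasure (arclength \<Omega>) (space (arclength \<Omega>)) \<noteq> \<infinity>"
    using hausdorff1_frontier_finite by (simp add: top.not_eq_extremum le_less_trans)
qed

section \<open>Testing the maximal operator on bumps\<close>

lemma bump_dilated_Cplus_eq_one:
  assumes "norm \<theta> = 1" "t > 0" "W > 0"
    and D: "\<And>z. z \<in> closure \<Omega> \<Longrightarrow> norm z \<le> D" and WD: "2^j * D \<le> W / 2"
    and x: "x \<in> rect \<theta> (2^j * support_fun \<Omega> \<theta> - t) (2^j * support_fun \<Omega> \<theta>) (W / 2)"
    and y: "y \<in> Cplus \<Omega> \<theta> (t / 2^j)"
  shows "bump \<theta> t W (x - 2^j *\<^sub>R y) = 1"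
proof (rule bump_eq_one[OF assms(2,3)])
  have "support_fun \<Omega> \<theta> - t / 2^j \<le> y \<bullet> \<theta>" "y \<bullet> \<theta> \<le> support_fun \<Omega> \<theta>"
    using Cplus_inner_bounds[OF assms(1) y] by auto
  then have "2^j * support_fun \<Omega> \<theta> - t \<le> 2^j * (y \<bullet> \<theta>)"
    and "2^j * (y \<bullet> \<theta>) \<le> 2^j * support_fun \<Omega> \<theta>"
    by (simp_all add: field_simps)
  moreover have "2^j * support_fun \<Omega> \<theta> - t \<le> x \<bullet> \<theta>" "x \<bullet> \<theta> \<le> 2^j * support_fun \<Omega> \<theta>"
    using x unfolding rect_def by auto
  ultimately show "\<bar>(x - 2^j *\<^sub>R y) \<bullet> \<theta>\<bar> \<le> t"
    unfolding inner_diff_left inner_scaleR_left abs_le_iff by linarith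
  have "\<bar>y \<bullet> perp \<theta>\<bar> \<le> norm y * norm (perp \<theta>)" by (rule Cauchy_Schwarz_ineq2)
  then have "\<bar>y \<bullet> perp \<theta>\<bar> \<le> D"
    using D[OF Cplus_inner_bounds(1)[OF assms(1) y]] assms(1) norm_perp[of \<theta>] by simp
  then have "2^j * \<bar>y \<bullet> perp \<theta>\<bar> \<le> 2^j * D" by (intro mult_left_mono) auto
  then have "\<bar>2^j * (y \<bullet> perp \<theta>)\<bar> \<le> W / 2" using WD by (simp only: abs_mult power_abs abs_numeral)
  moreover have "\<bar>x \<bullet> perp \<theta>\<bar> \<le> W / 2" using x unfolding rect_def by simp
  ultimately show "\<bar>(x - 2^j *\<^sub>R y) \<bullet> perp \<theta>\<bar> \<le> W"
    unfolding inner_diff_left inner_scaleR_left by linarith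
qed

lemma maxop_bump_lower:
  assumes "norm \<theta> = 1" "t > 0" "W > 0" "K > 0"
    and "\<And>z. z \<in> closure \<Omega> \<Longrightarrow> norm z \<le> D" "2^j * D \<le> W / 2"
    and "x \<in> rect \<theta> (2^j * support_fun \<Omega> \<theta> - t) (2^j * support_fun \<Omega> \<theta>) (W / 2)"
  shows "ennreal (measure (arclength \<Omega>) (Cplus \<Omega> \<theta> (t / 2^j)) / K)
    \<le> maxop \<Omega> (\<lambda>z. bump \<theta> t W z / K) x"
proof -
  interpret finite_measure "arclength \<Omega>" by (rule finite_measure_arclength)
  let ?C = "Cplus \<Omega> \<theta> (t / 2^j)"
  let ?g = "\<lambda>y. bump \<theta> t W (x - (2 powr real_of_int (int j)) *\<^sub>R y) / K"
  have le: "indicator ?C y / K \<le> ?g y" for y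
    using bump_dilated_Cplus_eq_one[OF assms(1-3,5-7)] bump_nonneg assms(4)
    by (cases "y \<in> ?C") (simp_all add: powr_realpow)
  have "integrable (arclength \<Omega>) ?g"
  proof (rule integrable_const_bound[where B="1/K"])
    show "AE y in arclength \<Omega>. norm (?g y) \<le> 1 / K"
      using bump_nonneg bump_le_one assms(4) by (intro AE_I2) (simp add: divide_right_mono)
    show "?g \<in> borel_measurable (arclength \<Omega>)"
      by (intro borel_measurable_arclength borel_measurable_continuous_onI continuous_intros
          continuous_on_compose2[OF continuous_on_bump]) (use assms(4) in auto)
  qed
  moreover have "integrable (arclength \<Omega>) (\<lambda>y. indicator ?C y / K :: real)"
    using closed_Cplus by (intro integrable_divide_zero integrable_real_indicator)
      (simp_all add: sets_arclength borel_closed less_top[symmetric])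
  ultimately have "integral\<^sup>L (arclength \<Omega>) (\<lambda>y. indicator ?C y / K) \<le> integral\<^sup>L (arclength \<Omega>) ?g"
    using le by (intro integral_mono)
  then have "measure (arclength \<Omega>) ?C / K \<le> integral\<^sup>L (arclength \<Omega>) ?g"
    by (simp add: space_arclength)
  then have "ennreal (measure (arclength \<Omega>) ?C / K) \<le> ennreal \<bar>integral\<^sup>L (arclength \<Omega>) ?g\<bar>"
    by (intro ennreal_leI) linarith
  also have "\<dots> \<le> maxop \<Omega> (\<lambda>z. bump \<theta> t W z / K) x"
    unfolding maxop_def by (rule SUP_upper2[of "int j"]) auto
  finally show ?thesis .
qed

lemma sum_rect_indicator_le_maxop_powr:
  assumes "norm \<theta> = 1" "t > 0" "W > 0" "K > 0" "q > 0" "finite J"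
    and "\<And>z. z \<in> closure \<Omega> \<Longrightarrow> norm z \<le> D" "\<And>j. j \<in> J \<Longrightarrow> 2^j * D \<le> W / 2"
    and "\<And>i j. i \<in> J \<Longrightarrow> j \<in> J \<Longrightarrow> i < j \<Longrightarrow> 2^i * support_fun \<Omega> \<theta> < 2^j * support_fun \<Omega> \<theta> - t"
  shows "(\<Sum>j\<in>J. ennreal ((measure (arclength \<Omega>) (Cplus \<Omega> \<theta> (t / 2^j)) / K) powr q)
      * indicator (rect \<theta> (2^j * support_fun \<Omega> \<theta> - t) (2^j * support_fun \<Omega> \<theta>) (W / 2)) x)
    \<le> enn_powr q (maxop \<Omega> (\<lambda>z. bump \<theta> t W z / K) x)"
  using disjoint_family_on_dilated_rects[OF assms(9)]
proof (rule sum_disjoint_indicator_le[OF assms(6)])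
  fix j assume "j \<in> J" "x \<in> rect \<theta> (2^j * support_fun \<Omega> \<theta> - t) (2^j * support_fun \<Omega> \<theta>) (W / 2)"
  then have "ennreal (measure (arclength \<Omega>) (Cplus \<Omega> \<theta> (t / 2^j)) / K) \<le> maxop \<Omega> (\<lambda>z. bump \<theta> t W z / K) x"
    by (intro maxop_bump_lower[OF assms(1-4,7,8)])
  then have "enn_powr q (ennreal (measure (arclength \<Omega>) (Cplus \<Omega> \<theta> (t / 2^j)) / K))
      \<le> enn_powr q (maxop \<Omega> (\<lambda>z. bump \<theta> t W z / K) x)"
    by (rule enn_powr_mono[OF assms(5)])
  then show "ennreal ((measure (arclength \<Omega>) (Cplus \<Omega> \<theta> (t / 2^j)) / K) powr q)
      \<le> enn_powr q (maxop \<Omega> (\<lambda>z. bump \<theta> t W z / K) x)"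
    using assms(4) by (simp add: enn_powr_ennreal)
qed

text \<open>The separation hypothesis on \<open>J\<close> makes the rectangles below the dilated supporting lines
  pairwise disjoint, so that the lower bounds of \<open>maxop_bump_lower\<close> add up in \<open>L\<^sup>q\<close>.\<close>

lemma sum_Cplus_powr_le_maxop_norm:
  assumes "norm \<theta> = 1" "t > 0" "q \<ge> 1" "finite J"
    and "\<And>i j. i \<in> J \<Longrightarrow> j \<in> J \<Longrightarrow> i < j \<Longrightarrow> 2^i * support_fun \<Omega> \<theta> < 2^j * support_fun \<Omega> \<theta> - t"
  shows "enn_root q (ennreal ((\<Sum>j\<in>J. measure (arclength \<Omega>) (Cplus \<Omega> \<theta> (t / 2^j)) powr q) / 16))
    \<le> maxop_norm \<Omega> q"
proof -
  have q: "q > 0" using assms(3) by simp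
  obtain D where D: "D \<ge> 0" "\<And>z. z \<in> closure \<Omega> \<Longrightarrow> norm z \<le> D"
    using closure_dom_bounded by blast
  obtain W where W: "W > 0" "\<And>j. j \<in> J \<Longrightarrow> 2^j * D \<le> W / 2"
    using exists_dilation_bound[OF assms(4) D(1)] by blast
  obtain K where K: "K > 0" "K powr q \<le> 16 * t * W"
    and g: "Cc (\<lambda>z. bump \<theta> t W z / K)" "lq_norm q (\<lambda>z. bump \<theta> t W z / K) = 1"
    using normalized_bump[OF assms(1,2) W(1) q] by blast
  define \<phi> where "\<phi> j = measure (arclength \<Omega>) (Cplus \<Omega> \<theta> (t / 2^j))" for j :: nat
  define R where "R j = rect \<theta> (2^j * support_fun \<Omega> \<theta> - t) (2^j * support_fun \<Omega> \<theta>) (W / 2)" for j :: nat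
  have R_sets: "R j \<in> sets lebesgue" for j
    unfolding R_def using closed_rect by (simp add: borel_closed)
  have "emeasure lebesgue (R j) = ennreal (t * W)" for j
    unfolding R_def using emeasure_rect[OF assms(1)] assms(2) W(1) by simp
  then have rect_term: "ennreal (\<phi> j powr q / 16) \<le> ennreal ((\<phi> j / K) powr q) * emeasure lebesgue (R j)" for j
    using powr_div_16_le_mult[OF _ K(1) K(2)[unfolded mult.assoc]] by (simp add: \<phi>_def)
  have "ennreal ((\<Sum>j\<in>J. \<phi> j powr q) / 16) = (\<Sum>j\<in>J. ennreal (\<phi> j powr q / 16))"
    by (simp add: sum_divide_distrib)
  also have "\<dots> \<le> (\<Sum>j\<in>J. ennreal ((\<phi> j / K) powr q) * emeasure lebesgue (R j))"
    by (intro sum_mono rect_term)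
  also have "\<dots> = (\<integral>\<^sup>+ x. (\<Sum>j\<in>J. ennreal ((\<phi> j / K) powr q) * indicator (R j) x) \<partial>lebesgue)"
    using R_sets by (rule nn_integral_sum_cmult_indicator[symmetric])
  also have "\<dots> \<le> (\<integral>\<^sup>+ x. enn_powr q (maxop \<Omega> (\<lambda>z. bump \<theta> t W z / K) x) \<partial>lebesgue)"
    unfolding \<phi>_def R_def
    by (intro nn_integral_mono sum_rect_indicator_le_maxop_powr[OF assms(1,2) W(1) K(1) q assms(4) D(2) W(2) assms(5)])
  also have "\<dots> = (\<integral>\<^sup>+ x. enn_powr q (maxop \<Omega> (\<lambda>z. bump \<theta> t W z / K) x) \<partial>lborel)"
    by (simp add: nn_integral_completion)
  finally have "enn_root q (ennreal ((\<Sum>j\<in>J. \<phi> j powr q) / 16))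
      \<le> lq_norm_enn q (maxop \<Omega> (\<lambda>z. bump \<theta> t W z / K))"
    unfolding lq_norm_enn_def by (rule enn_root_mono[OF q])
  also have "\<dots> \<le> maxop_norm \<Omega> q"
    unfolding maxop_norm_def using g by (intro SUP_upper) simp
  finally show ?thesis unfolding \<phi>_def .
qed

lemma sum_Cplus_powr_tail_le:
  assumes "norm \<theta> = 1" "q \<ge> 1" "\<delta>0 > 0" "maxop_norm \<Omega> q < \<infinity>"
    and "\<delta>0 < 2^m * support_fun \<Omega> \<theta>"
  shows "(\<Sum>j\<in>{m..<M}. measure (arclength \<Omega>) (Cplus \<Omega> \<theta> (\<delta>0 / 2^j)) powr q)
    \<le> 16 * enn2real (maxop_norm \<Omega> q) powr q"
proof -
  have "enn_root q (ennreal ((\<Sum>j\<in>{m..<M}. measure (arclength \<Omega>) (Cplus \<Omega> \<theta> (\<delta>0 / 2^j)) powr q) / 16))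
      \<le> maxop_norm \<Omega> q"
    by (rule sum_Cplus_powr_le_maxop_norm[OF assms(1,3,2)]) (use dilation_separates[OF assms(3,5)] in auto)
  also have "\<dots> = ennreal (enn2real (maxop_norm \<Omega> q))" using assms(4) by simp
  finally have "(\<Sum>j\<in>{m..<M}. measure (arclength \<Omega>) (Cplus \<Omega> \<theta> (\<delta>0 / 2^j)) powr q) / 16
      \<le> enn2real (maxop_norm \<Omega> q) powr q"
    using assms(2) by (intro enn_root_le_ennreal_imp) (auto intro: sum_nonneg)
  then show ?thesis by simp
qed

section \<open>The dyadic integral\<close>

lemma measure_Cplus_mono:
  "\<delta> \<le> \<delta>' \<Longrightarrow> measure (arclength \<Omega>) (Cplus \<Omega> \<theta> \<delta>) \<le> measure (arclength \<Omega>) (Cplus \<Omega> \<theta> \<delta>')"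
proof -
  assume "\<delta> \<le> \<delta>'"
  interpret finite_measure "arclength \<Omega>" by (rule finite_measure_arclength)
  show ?thesis using Cplus_mono[OF \<open>\<delta> \<le> \<delta>'\<close>] closed_Cplus
    by (intro finite_measure_mono) (simp_all add: sets_arclength borel_closed)
qed

lemma Lambda_mono: "\<delta> \<le> \<delta>' \<Longrightarrow> Lambda \<Omega> \<theta> \<delta> \<le> Lambda \<Omega> \<theta> \<delta>'"
  unfolding Lambda_def Cminus_eq_Cplus_uminus using measure_Cplus_mono by (meson max.mono)

lemma Lambda_powr_le:
  assumes "q > 0"
  shows "Lambda \<Omega> \<theta> \<delta> powr q
    \<le> measure (arclength \<Omega>) (Cplus \<Omega> \<theta> \<delta>) powr q + measure (arclength \<Omega>) (Cplus \<Omega> (-\<theta>) \<delta>) powr q"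
  unfolding Lambda_def Cminus_eq_Cplus_uminus max_def by simp

lemma suminf_Cplus_powr_le:
  assumes "norm \<theta> = 1" "q \<ge> 1" "\<delta>0 > 0" "maxop_norm \<Omega> q < \<infinity>"
    and "\<delta>0 < 2^m * support_fun \<Omega> \<theta>"
  shows "(\<Sum>j. ennreal (measure (arclength \<Omega>) (Cplus \<Omega> \<theta> (\<delta>0 / 2^j)) powr q))
    \<le> ennreal (real m * measure (arclength \<Omega>) UNIV powr q + 16 * enn2real (maxop_norm \<Omega> q) powr q)"
proof (rule suminf_le_const[OF summableI])
  interpret finite_measure "arclength \<Omega>" by (rule finite_measure_arclength)
  fix M :: nat
  define f where "f j = measure (arclength \<Omega>) (Cplus \<Omega> \<theta> (\<delta>0 / 2^j)) powr q" for j
  have initial: "sum f {..<m} \<le> real m * measure (arclength \<Omega>) UNIV powr q"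
  proof -
    have "f j \<le> measure (arclength \<Omega>) UNIV powr q" for j
      unfolding f_def using assms(2) bounded_measure[of "Cplus \<Omega> \<theta> (\<delta>0 / 2^j)"]
      by (intro powr_mono2) (auto simp: space_arclength)
    then show ?thesis using sum_bounded_above[of "{..<m}" f] by simp
  qed
  have "sum f {..<M} \<le> sum f ({..<m} \<union> {m..<M})"
    by (intro sum_mono2) (auto simp: f_def)
  also have "\<dots> = sum f {..<m} + sum f {m..<M}"
    by (rule sum.union_disjoint) auto
  also have "\<dots> \<le> real m * measure (arclength \<Omega>) UNIV powr q + 16 * enn2real (maxop_norm \<Omega> q) powr q"
    using initial sum_Cplus_powr_tail_le[OF assms, of M] unfolding f_def by (rule add_mono)
  finally have "ennreal (sum f {..<M})
      \<le> ennreal (real m * measure (arclength \<Omega>) UNIV powr q + 16 * enn2real (maxop_norm \<Omega> q) powr q)"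
    by (rule ennreal_leI)
  moreover have "(\<Sum>j<M. ennreal (f j)) = ennreal (sum f {..<M})"
    by (rule sum_ennreal) (simp add: f_def)
  ultimately show "(\<Sum>j<M. ennreal (f j))
      \<le> ennreal (real m * measure (arclength \<Omega>) UNIV powr q + 16 * enn2real (maxop_norm \<Omega> q) powr q)"
    by simp
qed

lemma measure_Cplus_eq_0:
  assumes "maxop_norm \<Omega> q = 0" "norm \<theta> = 1" "\<delta> > 0" "q \<ge> 1"
  shows "measure (arclength \<Omega>) (Cplus \<Omega> \<theta> \<delta>) = 0"
proof -
  have "enn_root q (ennreal (measure (arclength \<Omega>) (Cplus \<Omega> \<theta> \<delta>) powr q / 16)) \<le> 0"
    using sum_Cplus_powr_le_maxop_norm[OF assms(2,3,4), of "{0}"] assms(1) by simp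
  then show ?thesis using assms(4) by (simp add: enn_root_def)
qed

lemma SUP_dyadic_integral_finite:
  assumes "q \<ge> 1" "\<delta>0 > 0" "maxop_norm \<Omega> q < \<infinity>"
  shows "(SUP \<theta>\<in>sphere 0 1.
      enn_root q (\<integral>\<^sup>+ \<delta>\<in>{0<..<\<delta>0}. ennreal (Lambda \<Omega> \<theta> \<delta> powr q / \<delta>) \<partial>lborel)) < \<infinity>"
proof -
  have q: "q > 0" using assms(1) by simp
  obtain r where r: "r > 0" "\<And>\<theta>. norm \<theta> = 1 \<Longrightarrow> r \<le> support_fun \<Omega> \<theta>"
    using support_fun_uniformly_positive by blast
  obtain m :: nat where "\<delta>0 / r < 2^m" using real_arch_pow[of 2 "\<delta>0 / r"] by auto
  then have "\<delta>0 < 2^m * r" using r(1) by (simp add: field_simps)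
  have m: "\<delta>0 < 2^m * support_fun \<Omega> \<theta>" if "norm \<theta> = 1" for \<theta>
  proof -
    have "2^m * r \<le> 2^m * support_fun \<Omega> \<theta>" using r(2)[OF that] by (intro mult_left_mono) auto
    with \<open>\<delta>0 < 2^m * r\<close> show ?thesis by linarith
  qed
  define Z where "Z = real m * measure (arclength \<Omega>) UNIV powr q + 16 * enn2real (maxop_norm \<Omega> q) powr q"
  let ?\<phi> = "\<lambda>\<theta> \<delta>. measure (arclength \<Omega>) (Cplus \<Omega> \<theta> \<delta>) powr q"
  have "(\<integral>\<^sup>+ \<delta>\<in>{0<..<\<delta>0}. ennreal (Lambda \<Omega> \<theta> \<delta> powr q / \<delta>) \<partial>lborel) \<le> ennreal (2 * Z)"
    if "\<theta> \<in> sphere 0 1" for \<theta>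
  proof -
    have "(\<integral>\<^sup>+ \<delta>\<in>{0<..<\<delta>0}. ennreal (Lambda \<Omega> \<theta> \<delta> powr q / \<delta>) \<partial>lborel)
        \<le> (\<Sum>j. ennreal (Lambda \<Omega> \<theta> (\<delta>0 / 2^j) powr q))"
      using q by (intro nn_integral_dyadic_le[OF assms(2)] powr_mono2 Lambda_mono)
        (auto simp: Lambda_def le_max_iff_disj)
    also have "\<dots> \<le> (\<Sum>j. ennreal (?\<phi> \<theta> (\<delta>0 / 2^j)) + ennreal (?\<phi> (-\<theta>) (\<delta>0 / 2^j)))"
      using Lambda_powr_le[OF q] by (intro suminf_le summableI) (simp flip: ennreal_plus)
    also have "\<dots> = (\<Sum>j. ennreal (?\<phi> \<theta> (\<delta>0 / 2^j))) + (\<Sum>j. ennreal (?\<phi> (-\<theta>) (\<delta>0 / 2^j)))"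
      by (rule suminf_add[OF summableI summableI, symmetric])
    also have "\<dots> \<le> ennreal Z + ennreal Z"
      using that m unfolding Z_def by (intro add_mono suminf_Cplus_powr_le assms) auto
    also have "\<dots> = ennreal (2 * Z)" unfolding Z_def by (simp flip: ennreal_plus)
    finally show ?thesis .
  qed
  then have "(SUP \<theta>\<in>sphere 0 1. enn_root q (\<integral>\<^sup>+ \<delta>\<in>{0<..<\<delta>0}. ennreal (Lambda \<Omega> \<theta> \<delta> powr q / \<delta>) \<partial>lborel))
      \<le> enn_root q (ennreal (2 * Z))"
    by (intro SUP_least enn_root_mono[OF q])
  also have "\<dots> < \<infinity>" by (simp add: enn_root_def)
  finally show ?thesis .
qed

lemma SUP_dyadic_integral_eq_0:
  assumes "q \<ge> 1" "maxop_norm \<Omega> q = 0"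
  shows "(SUP \<theta>\<in>sphere 0 1.
      enn_root q (\<integral>\<^sup>+ \<delta>\<in>{0<..<\<delta>0}. ennreal (Lambda \<Omega> \<theta> \<delta> powr q / \<delta>) \<partial>lborel)) = 0"
proof -
  have "Lambda \<Omega> \<theta> \<delta> = 0" if "\<theta> \<in> sphere 0 1" "\<delta> > 0" for \<theta> \<delta>
    using measure_Cplus_eq_0[OF assms(2)] that assms(1)
    unfolding Lambda_def Cminus_eq_Cplus_uminus by simp
  then have "(\<lambda>\<delta>. ennreal (Lambda \<Omega> \<theta> \<delta> powr q / \<delta>) * indicator {0<..<\<delta>0} \<delta>) = (\<lambda>_. 0)"
    if "\<theta> \<in> sphere 0 1" for \<theta>
    using that by (auto simp: indicator_def)
  then show ?thesis by (simp add: enn_root_def)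
qed

end

theorem mainTheorem3:
  fixes \<Omega> :: "(real^2) set" and \<delta>0 q :: real
  assumes "open \<Omega>" and "convex \<Omega>" and "compact (closure \<Omega>)" and "0 \<in> \<Omega>"
    and "\<delta>0 > 0"
    and "\<forall>\<theta>\<in>sphere 0 1. \<forall>\<delta>. 0 < \<delta> \<and> \<delta> < \<delta>0 \<longrightarrow> Cplus \<Omega> \<theta> \<delta> \<inter> Cminus \<Omega> \<theta> \<delta> = {}"
    and "1 \<le> q"
  shows "\<exists>c>0. (SUP f\<in>{f. Cc f \<and> lq_norm q f = 1}. lq_norm_enn q (maxop \<Omega> f))
           \<ge> ennreal c * (SUP \<theta>\<in>sphere 0 1.
               enn_root q (\<integral>\<^sup>+ \<delta>\<in>{0<..<\<delta>0}. ennreal (Lambda \<Omega> \<theta> \<delta> powr q / \<delta>) \<partial>lborel))"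
proof -
  interpret convex_domain \<Omega> using assms(1-4) by unfold_locales
  show ?thesis
    using ex_pos_mult_le_ennreal SUP_dyadic_integral_finite[OF assms(7,5)] SUP_dyadic_integral_eq_0[OF assms(7)]
    unfolding maxop_norm_def by blast
qed

end
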